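(* For every integer $m\ge1$, every $k\ge1$ and all integers $n_1,\dots,n_k$ (of arbitrary signs), $$M\big(\mathcal G(m,n_1)\,\mathcal G(m,n_2)\cdots\mathcal G(m,n_k)\big)=M\big(\mathcal G(m,n_1+n_2+\cdots+n_k)\big).$$
   Context: Grid conventions: an $m$-by-$N$ grid has vertices $(i,j)$, $1\le i\le m$ (rows), $1\le j\le N$ (columns); horizontal edges join $(i,j),(i,j+1)$, vertical edges join $(i,j),(i+1,j)$. A signed graph is a graph each of whose edges carries a sign $+1$ or $-1$ (parallel edges allowed). For a signed graph $\mathcal G$, $M(\mathcal G)$ denotes the sum over all perfect matchings of $\mathcal G$ of the product of the signs of the edges in the matching (the empty graph has $M=1$). For $m\ge1$ and $n\ge 1$, $\mathcal G(m,n)$ is the $m$-by-$n$ grid graph with all edges of sign $+1$. For $n\le 0$, $\mathcal G(m,n)$ has the vertex set of the $m$-by-$(2-n)$ grid, all horizontal edges of that grid with sign $+1$, the vertical edges lying in columns $2,3,\dots,1-n$ with sign $-1$, and no vertical edges in columns $1$ and $2-n$. A signed graph of width $m$ is a signed graph whose vertex set is that of an $m$-by-$N$ grid for some $N\ge1$ and whose edges are edges of that grid. For signed graphs $\mathcal G_1,\mathcal G_2$ of width $m$ (with $N_1$ and $N_2$ columns), the adjoined graph $\mathcal G_1\mathcal G_2$ is the signed graph of width $m$ with $N_1+N_2$ columns obtained by placing $\mathcal G_1$ to the left of $\mathcal G_2$ and joining, for each row $i$, the rightmost vertex of row $i$ of $\mathcal G_1$ to the leftmost vertex of row $i$ of $\mathcal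 G_2$ by an edge of sign $+1$. Adjunction is associative. *)

theory Defs
  imports Main
begin

type_synonym vtx = "nat \<times> nat"   (* (row i, column j), 1-based *)
type_synonym sedge = "(vtx \<times> vtx) \<times> int"  (* (endpoints, sign +1/-1) *)

text \<open>A signed graph of width m: number of columns N and a list of signed edges
(a list, so parallel edges are allowed). The width m is passed separately.\<close>
datatype sgraph = SG (ncols: nat) (sedges: "sedge list")

definition verts :: "nat \<Rightarrow> sgraph \<Rightarrow> vtx set" where
  "verts m g = {1..m} \<times> {1..ncols g}"

definition ends :: "sedge \<Rightarrow> vtx set" where
  "ends e = {fst (fst e), snd (fst e)}"

definition perfect_matching :: "nat \<Rightarrow> sgraph \<Rightarrow> nat set \<Rightarrow> bool" where
  "perfect_matching m g S \<longleftrightarrow> S \<subseteq> {..<length (sedges g)} \<and>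
     (\<forall>i\<in>S. ends (sedges g ! i) \<subseteq> verts m g) \<and>
     (\<forall>v\<in>verts m g. card {i\<in>S. v \<in> ends (sedges g ! i)} = 1)"

definition Mat :: "nat \<Rightarrow> sgraph \<Rightarrow> int" where
  "Mat m g = (\<Sum>S\<in>{S. perfect_matching m g S}. \<Prod>i\<in>S. snd (sedges g ! i))"

definition hedges :: "nat \<Rightarrow> nat \<Rightarrow> sedge list" where
  "hedges m N = [(((i,j),(i,j+1)), 1). i \<leftarrow> [1..<m+1], j \<leftarrow> [1..<N]]"

definition vedges :: "nat \<Rightarrow> nat list \<Rightarrow> int \<Rightarrow> sedge list" where
  "vedges m cols s = [(((i,j),(i+1,j)), s). i \<leftarrow> [1..<m], j \<leftarrow> cols]"

definition Ggrid :: "nat \<Rightarrow> int \<Rightarrow> sgraph" where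
  "Ggrid m n = (if n \<ge> 1 then SG (nat n) (hedges m (nat n) @ vedges m [1..<nat n + 1] 1)
                else SG (nat (2 - n)) (hedges m (nat (2 - n)) @ vedges m [2..<nat (2 - n)] (-1)))"

definition shift_edge :: "nat \<Rightarrow> sedge \<Rightarrow> sedge" where
  "shift_edge k e = (case e of (((i,j),(i',j')), s) \<Rightarrow> (((i,j+k),(i',j'+k)), s))"

definition adjoin :: "nat \<Rightarrow> sgraph \<Rightarrow> sgraph \<Rightarrow> sgraph" where
  "adjoin m g1 g2 = SG (ncols g1 + ncols g2)
     (sedges g1 @ map (shift_edge (ncols g1)) (sedges g2)
      @ [(((i, ncols g1), (i, ncols g1 + 1)), 1). i \<leftarrow> [1..<m+1]])"

fun adjoin_list :: "nat \<Rightarrow> sgraph list \<Rightarrow> sgraph" where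
  "adjoin_list m [] = SG 0 []"
| "adjoin_list m [g] = g"
| "adjoin_list m (g # gs) = adjoin m g (adjoin_list m gs)"

end

(* A state at a cut between two columns is the set of rows whose
   matching edge crosses the cut.  For a strip and boundary states A, B, the signed
   count of matchings in which exactly the rows A (left end) and B (right end) are
   covered from outside forms a matrix indexed by subsets of {1..m}, and adjoining
   strips multiplies these matrices.  A column with vertical edges of sign s has
   matrix T_s E: E is the complementation permutation (a row not covered from the
   left must leave to the right), and T_s A B sums s^(number of dominoes) over the
   domino tilings of B - A.  Recolouring dominoes gives T_a T_b = T_(a+b) and T_0 = 1;
   together with E E = 1 this makes P = T_1 E invertible with inverse E T_(-1).
   So G(m,n) has matrix P^n for n >= 1, and E (T_(-1) E)^p E = (E T_(-1))^p = P^(-p)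
   for n = -p <= 0.  The adjoined graph therefore has matrix P^(n_1 + ... + n_k), and
   the matching count M is its ({}, {}) entry. *)

theory Submission
  imports Defs "HOL-Algebra.Ring"
begin

lemma sum_Pow_power_card:
  fixes a b :: "'a :: comm_semiring_1"
  assumes "finite L"
  shows "(\<Sum>K\<in>Pow L. a ^ card K * b ^ card (L - K)) = (a + b) ^ card L"
proof -
  have "(a + b) ^ card L = (\<Prod>x\<in>L. a + b)" by simp
  also have "\<dots> = (\<Sum>K\<in>Pow L. (\<Prod>x\<in>K. a) * (\<Prod>x\<in>L - K. b))"
    by (rule prod_add[OF assms])
  finally show ?thesis by simp
qed

lemma Int_image_eq_empty: "(\<And>i. f i \<notin> A) \<Longrightarrow> A \<inter> f ` I = {}"
  by blast

lemma ball_atLeastAtMost_add_split: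
  fixes N1 N2 :: nat
  shows "(\<forall>j\<in>{1..N1 + N2}. P j) \<longleftrightarrow> (\<forall>j\<in>{1..N1}. P j) \<and> (\<forall>j\<in>{1..N2}. P (j + N1))"
proof -
  have "{1..N1 + N2} = {1..N1} \<union> (\<lambda>j. j + N1) ` {1..N2}"
    by auto
  then show ?thesis
    by (simp only: ball_Un Ball_image_comp comp_def)
qed

lemma card_filter_image:
  assumes "inj_on f S"
  shows "card {i \<in> S. P (f i)} = card {e \<in> f ` S. P e}"
proof -
  have "{e \<in> f ` S. P e} = f ` {i \<in> S. P (f i)}"
    by auto
  moreover have "inj_on f {i \<in> S. P (f i)}"
    using assms by (rule inj_on_subset) auto
  ultimately show ?thesis
    by (simp add: card_image)
qed

lemma of_bool_sum4_eq_1: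
  "of_bool P + of_bool Q + of_bool R + of_bool S = (1::nat) \<longleftrightarrow>
     (P \<and> \<not> Q \<and> \<not> R \<and> \<not> S) \<or> (\<not> P \<and> Q \<and> \<not> R \<and> \<not> S) \<or>
     (\<not> P \<and> \<not> Q \<and> R \<and> \<not> S) \<or> (\<not> P \<and> \<not> Q \<and> \<not> R \<and> S)"
  by (cases P; cases Q; cases R; cases S) simp_all

lemma four_way_partition_iff:
  assumes "W \<subseteq> U" "X \<subseteq> U" "A \<subseteq> U" "B \<subseteq> U"
  shows "(\<forall>i\<in>U. of_bool (i \<in> W) + of_bool (i \<in> X) + of_bool (i \<in> A) + of_bool (i \<in> B) = (1::nat))
    \<longleftrightarrow> A \<inter> B = {} \<and> W \<inter> X = {} \<and> W \<union> X = U - A - B"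
  unfolding of_bool_sum4_eq_1 using assms by blast

lemma (in monoid) foldr_mult_replicate:
  fixes k :: nat
  assumes "x \<in> carrier G" "z \<in> carrier G"
  shows "foldr (\<otimes>) (replicate k x) z = x [^] k \<otimes> z"
proof (induction k)
  case (Suc k)
  have "foldr (\<otimes>) (replicate (Suc k) x) z = x \<otimes> (x [^] k \<otimes> z)"
    using Suc.IH by simp
  also have "\<dots> = x [^] Suc k \<otimes> z"
    using assms by (simp only: nat_pow_Suc2 m_assoc nat_pow_closed)
  finally show ?case .
qed (use assms in simp)

lemma (in monoid) mult_nat_pow_rotate:
  fixes k :: nat
  assumes x: "x \<in> carrier G" and y: "y \<in> carrier G"
  shows "x \<otimes> (y \<otimes> x) [^] k = (x \<otimes> y) [^] k \<otimes> x"
proof (induction k)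
  case (Suc k)
  have "x \<otimes> (y \<otimes> x) [^] Suc k = (x \<otimes> (y \<otimes> x) [^] k) \<otimes> (y \<otimes> x)"
    using x y by (simp add: m_assoc)
  also have "\<dots> = (x \<otimes> y) [^] k \<otimes> (x \<otimes> y) \<otimes> x"
    using x y by (simp add: Suc.IH m_assoc)
  finally show ?case
    by simp
qed (use x in simp)

lemma (in group) foldr_mult_int_pow:
  assumes "x \<in> carrier G"
  shows "foldr (\<otimes>) (map (\<lambda>i. x [^] i) is) \<one> = x [^] sum_list (is :: int list)"
  using assms by (induction "is") (simp_all add: int_pow_mult)

section \<open>Domino tilings of sets of rows\<close>

text \<open>A tiling of \<open>X\<close> by dominoes \<open>{i, Suc i}\<close>, represented by the set \<open>L\<close> of their smaller
  elements.\<close>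
definition domino_tiling :: "nat set \<Rightarrow> nat set \<Rightarrow> bool" where
  "domino_tiling X L \<longleftrightarrow> L \<inter> Suc ` L = {} \<and> L \<union> Suc ` L = X"

definition tiling_sum :: "int \<Rightarrow> nat set \<Rightarrow> int" where
  "tiling_sum c X = (\<Sum>L | domino_tiling X L. c ^ card L)"

lemma domino_tiling_subset: "domino_tiling X L \<Longrightarrow> L \<subseteq> X"
  unfolding domino_tiling_def by blast

lemma domino_tiling_subset_atLeastLessThan:
  assumes "domino_tiling X L" "X \<subseteq> {1..m}"
  shows "L \<subseteq> {1..<m}"
proof
  fix i assume "i \<in> L"
  then have "i \<in> X" "Suc i \<in> X"
    using assms(1) by (auto simp: domino_tiling_def)
  then show "i \<in> {1..<m}"
    using assms(2) by auto
qed

lemma finite_domino_tilings: "finite X \<Longrightarrow> finite {L. domino_tiling X L}"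
  by (rule finite_subset[of _ "Pow X"]) (auto dest: domino_tiling_subset)

lemma tiling_sum_zero:
  assumes "finite X"
  shows "tiling_sum 0 X = (if X = {} then 1 else 0)"
proof -
  have "finite L" if "domino_tiling X L" for L
    using assms that domino_tiling_subset finite_subset by blast
  then have "tiling_sum 0 X = (\<Sum>L | domino_tiling X L. if L = {} then 1 else 0)"
    unfolding tiling_sum_def by (intro sum.cong) auto
  also have "\<dots> = (if domino_tiling X {} then 1 else 0)"
    using finite_domino_tilings[OF assms] by simp
  finally show ?thesis
    by (simp add: domino_tiling_def eq_commute)
qed

lemma domino_tiling_disjoint_Un:
  assumes "domino_tiling V K" "domino_tiling W K'" "V \<inter> W = {}"
  shows "domino_tiling (V \<union> W) (K \<union> K')" "K \<inter> K' = {}"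
  using assms by (auto simp: domino_tiling_def)

lemma domino_tiling_split:
  assumes "domino_tiling D L" "K \<subseteq> L"
  shows "domino_tiling (K \<union> Suc ` K) K" "domino_tiling (D - (K \<union> Suc ` K)) (L - K)"
    "K \<subseteq> D" "Suc ` K \<subseteq> D"
  using assms by (auto simp: domino_tiling_def)

text \<open>Colour each domino of a tiling of \<open>D\<close> by \<open>a\<close> or \<open>b\<close>; the \<open>a\<close>-dominoes tile some
  \<open>V \<subseteq> D\<close> and the \<open>b\<close>-dominoes tile \<open>D - V\<close>.\<close>
lemma tiling_sum_convolution:
  assumes "finite D"
  shows "(\<Sum>V\<in>Pow D. tiling_sum a V * tiling_sum b (D - V)) = tiling_sum (a + b) D"
proof -
  have fin: "finite V" if "V \<in> Pow D" for V
    using assms that finite_subset by auto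
  have tiling_pair: "K \<union> K' - K = K' \<and> K \<union> Suc ` K = V \<and> domino_tiling D (K \<union> K')"
    if "V \<subseteq> D" and K: "domino_tiling V K" and K': "domino_tiling (D - V) K'" for V K K'
  proof -
    have "K \<inter> K' = {}" "domino_tiling D (K \<union> K')"
      using domino_tiling_disjoint_Un[OF K K'] \<open>V \<subseteq> D\<close> by (auto simp: Un_absorb1)
    moreover have "K \<union> Suc ` K = V"
      using K by (simp add: domino_tiling_def)
    ultimately show ?thesis
      by blast
  qed
  have "(\<Sum>V\<in>Pow D. tiling_sum a V * tiling_sum b (D - V))
      = (\<Sum>(V, K, K')\<in>(SIGMA V:Pow D. SIGMA K:{K. domino_tiling V K}. {K'. domino_tiling (D - V) K'}).
           a ^ card K * b ^ card K')"
    unfolding tiling_sum_def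
    by (simp add: sum_product sum.Sigma finite_domino_tilings fin assms split_def)
  also have "\<dots> = (\<Sum>(L, K)\<in>(SIGMA L:{L. domino_tiling D L}. Pow L). a ^ card K * b ^ card (L - K))"
  proof (rule sum.reindex_bij_witness[where i = "\<lambda>(L, K). (K \<union> Suc ` K, K, L - K)"
                                       and j = "\<lambda>(V, K, K'). (K \<union> K', K)"], goal_cases)
    case (1 VKK')
    then show ?case using tiling_pair by force
  next
    case (2 VKK')
    then show ?case using tiling_pair by force
  next
    case (3 LK)
    then show ?case by clarsimp blast
  next
    case (4 LK)
    then obtain L K where "LK = (L, K)" "domino_tiling D L" "K \<subseteq> L"
      by auto
    then show ?case
      using domino_tiling_split[of D L K] by simp
  next
    case (5 VKK')
    then show ?case using tiling_pair by force
  qed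
  also have "\<dots> = (\<Sum>L | domino_tiling D L. (a + b) ^ card L)"
    using assms
    by (subst sum.Sigma[symmetric])
      (auto intro!: sum.cong sum_Pow_power_card finite_domino_tilings
        dest: domino_tiling_subset intro: finite_subset)
  finally show ?thesis
    by (simp add: tiling_sum_def)
qed

section \<open>Matrices indexed by sets of rows\<close>

type_synonym tmat = "nat set \<Rightarrow> nat set \<Rightarrow> int"

definition tmat_mult :: "nat \<Rightarrow> tmat \<Rightarrow> tmat \<Rightarrow> tmat" where
  "tmat_mult m X Y A B =
     (if A \<subseteq> {1..m} \<and> B \<subseteq> {1..m} then \<Sum>C\<in>Pow {1..m}. X A C * Y C B else 0)"

definition tmat_one :: "nat \<Rightarrow> tmat" where
  "tmat_one m A B = (if A \<subseteq> {1..m} \<and> A = B then 1 else 0)"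

definition tmat_monoid :: "nat \<Rightarrow> tmat monoid" where
  "tmat_monoid m =
     \<lparr>carrier = {X. \<forall>A B. X A B \<noteq> 0 \<longrightarrow> A \<subseteq> {1..m} \<and> B \<subseteq> {1..m}},
      mult = tmat_mult m, one = tmat_one m\<rparr>"

lemma tmat_carrier_iff:
  "X \<in> carrier (tmat_monoid m) \<longleftrightarrow> (\<forall>A B. X A B \<noteq> 0 \<longrightarrow> A \<subseteq> {1..m} \<and> B \<subseteq> {1..m})"
  by (simp add: tmat_monoid_def)

lemma tmat_monoid_simps [simp]:
  "mult (tmat_monoid m) = tmat_mult m"
  "\<one>\<^bsub>tmat_monoid m\<^esub> = tmat_one m"
  by (simp_all add: tmat_monoid_def)

lemma tmat_mult_assoc: "tmat_mult m (tmat_mult m X Y) Z = tmat_mult m X (tmat_mult m Y Z)"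
proof (intro ext)
  fix A B
  let ?U = "Pow {1..m}"
  show "tmat_mult m (tmat_mult m X Y) Z A B = tmat_mult m X (tmat_mult m Y Z) A B"
  proof (cases "A \<subseteq> {1..m} \<and> B \<subseteq> {1..m}")
    case True
    have "tmat_mult m (tmat_mult m X Y) Z A B = (\<Sum>C\<in>?U. (\<Sum>D\<in>?U. X A D * Y D C) * Z C B)"
      using True by (auto simp: tmat_mult_def intro!: sum.cong)
    also have "\<dots> = (\<Sum>C\<in>?U. \<Sum>D\<in>?U. X A D * Y D C * Z C B)"
      by (simp add: sum_distrib_right)
    also have "\<dots> = (\<Sum>D\<in>?U. \<Sum>C\<in>?U. X A D * Y D C * Z C B)"
      by (rule sum.swap)
    also have "\<dots> = (\<Sum>D\<in>?U. X A D * (\<Sum>C\<in>?U. Y D C * Z C B))"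
      by (simp add: sum_distrib_left mult.assoc)
    also have "\<dots> = tmat_mult m X (tmat_mult m Y Z) A B"
      using True by (auto simp: tmat_mult_def intro!: sum.cong)
    finally show ?thesis .
  qed (auto simp: tmat_mult_def)
qed

lemma tmat_mult_one_left:
  assumes "X \<in> carrier (tmat_monoid m)"
  shows "tmat_mult m (tmat_one m) X = X"
proof (intro ext)
  fix A B
  have "(\<Sum>C\<in>Pow {1..m}. tmat_one m A C * X C B) = (\<Sum>C\<in>Pow {1..m}. if C = A then X A B else 0)"
    by (rule sum.cong) (auto simp: tmat_one_def)
  then show "tmat_mult m (tmat_one m) X A B = X A B"
    using assms by (auto simp: tmat_mult_def tmat_carrier_iff)
qed

lemma tmat_mult_one_right:
  assumes "X \<in> carrier (tmat_monoid m)"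
  shows "tmat_mult m X (tmat_one m) = X"
proof (intro ext)
  fix A B
  have "(\<Sum>C\<in>Pow {1..m}. X A C * tmat_one m C B) = (\<Sum>C\<in>Pow {1..m}. if C = B then X A B else 0)"
    by (rule sum.cong) (auto simp: tmat_one_def)
  then show "tmat_mult m X (tmat_one m) A B = X A B"
    using assms by (auto simp: tmat_mult_def tmat_carrier_iff)
qed

lemma monoid_tmat_monoid: "monoid (tmat_monoid m)"
  by (rule monoidI)
    (auto simp: tmat_carrier_iff tmat_mult_def tmat_one_def tmat_mult_assoc
      tmat_mult_one_left tmat_mult_one_right)

definition tiling_mat :: "nat \<Rightarrow> int \<Rightarrow> tmat" where
  "tiling_mat m c A B = (if A \<subseteq> B \<and> B \<subseteq> {1..m} then tiling_sum c (B - A) else 0)"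

definition complement_mat :: "nat \<Rightarrow> tmat" where
  "complement_mat m A B = (if A \<subseteq> {1..m} \<and> B = {1..m} - A then 1 else 0)"

lemma tiling_mat_carrier: "tiling_mat m c \<in> carrier (tmat_monoid m)"
  by (auto simp: tmat_carrier_iff tiling_mat_def)

lemma complement_mat_carrier: "complement_mat m \<in> carrier (tmat_monoid m)"
  by (auto simp: tmat_carrier_iff complement_mat_def)

lemma tiling_mat_zero: "tiling_mat m 0 = tmat_one m"
proof (intro ext)
  fix A B
  show "tiling_mat m 0 A B = tmat_one m A B"
  proof (cases "A \<subseteq> B \<and> B \<subseteq> {1..m}")
    case True
    then have "finite (B - A)"
      by (auto intro: finite_subset)
    then show ?thesis
      using True by (auto simp: tiling_mat_def tmat_one_def tiling_sum_zero)
  qed (auto simp: tiling_mat_def tmat_one_def)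
qed

lemma tiling_mat_mult: "tmat_mult m (tiling_mat m a) (tiling_mat m b) = tiling_mat m (a + b)"
proof (intro ext)
  fix A B
  let ?t = "\<lambda>C. tiling_mat m a A C * tiling_mat m b C B"
  show "tmat_mult m (tiling_mat m a) (tiling_mat m b) A B = tiling_mat m (a + b) A B"
  proof (cases "A \<subseteq> B \<and> B \<subseteq> {1..m}")
    case True
    have inj: "inj_on ((\<union>) A) (Pow (B - A))"
      by (rule inj_onI) blast
    have "(\<Sum>C\<in>Pow {1..m}. ?t C) = (\<Sum>C\<in>(\<union>) A ` Pow (B - A). ?t C)"
    proof (rule sum.mono_neutral_right)
      show "(\<union>) A ` Pow (B - A) \<subseteq> Pow {1..m}"
        using True by blast
      show "\<forall>C\<in>Pow {1..m} - (\<union>) A ` Pow (B - A). ?t C = 0"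
      proof
        fix C assume C: "C \<in> Pow {1..m} - (\<union>) A ` Pow (B - A)"
        show "?t C = 0"
        proof (rule ccontr)
          assume "?t C \<noteq> 0"
          then have "A \<subseteq> C" "C \<subseteq> B"
            by (auto simp: tiling_mat_def split: if_splits)
          then have "C = A \<union> (C - A)" "C - A \<in> Pow (B - A)"
            by auto
          with C show False
            by blast
        qed
      qed
    qed simp
    also have "\<dots> = (\<Sum>V\<in>Pow (B - A). tiling_sum a V * tiling_sum b (B - A - V))"
    proof -
      have "?t (A \<union> V) = tiling_sum a V * tiling_sum b (B - A - V)" if "V \<subseteq> B - A" for V
      proof -
        have "A \<union> V - A = V" "B - (A \<union> V) = B - A - V" "A \<union> V \<subseteq> B" "A \<union> V \<subseteq> {1..m}"
          using True that by blast+
        then show ?thesis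
          using True by (simp add: tiling_mat_def)
      qed
      then show ?thesis
        by (simp add: sum.reindex[OF inj])
    qed
    also have "\<dots> = tiling_sum (a + b) (B - A)"
      using True by (intro tiling_sum_convolution) (auto intro: finite_subset)
    finally show ?thesis
      using True by (auto simp: tmat_mult_def tiling_mat_def)
  next
    case False
    then have vanish: "?t C = 0" for C
      by (auto simp: tiling_mat_def)
    have "tmat_mult m (tiling_mat m a) (tiling_mat m b) A B = 0"
      unfolding tmat_mult_def vanish by simp
    moreover have "tiling_mat m (a + b) A B = 0"
      using False by (auto simp: tiling_mat_def)
    ultimately show ?thesis
      by simp
  qed
qed

lemma tmat_mult_complement_mat_right:
  "tmat_mult m X (complement_mat m) A B =
     (if A \<subseteq> {1..m} \<and> B \<subseteq> {1..m} then X A ({1..m} - B) else 0)"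
proof (cases "A \<subseteq> {1..m} \<and> B \<subseteq> {1..m}")
  case True
  then have "(\<Sum>C\<in>Pow {1..m}. X A C * complement_mat m C B)
      = (\<Sum>C\<in>Pow {1..m}. if C = {1..m} - B then X A C else 0)"
    by (intro sum.cong) (auto simp: complement_mat_def)
  then show ?thesis
    using True by (simp add: tmat_mult_def)
qed (auto simp: tmat_mult_def)

lemma tmat_mult_complement_mat_left:
  "tmat_mult m (complement_mat m) X A B =
     (if A \<subseteq> {1..m} \<and> B \<subseteq> {1..m} then X ({1..m} - A) B else 0)"
proof (cases "A \<subseteq> {1..m} \<and> B \<subseteq> {1..m}")
  case True
  then have "(\<Sum>C\<in>Pow {1..m}. complement_mat m A C * X C B)
      = (\<Sum>C\<in>Pow {1..m}. if C = {1..m} - A then X C B else 0)"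
    by (intro sum.cong) (auto simp: complement_mat_def)
  then show ?thesis
    using True by (simp add: tmat_mult_def)
qed (auto simp: tmat_mult_def)

lemma complement_mat_square: "tmat_mult m (complement_mat m) (complement_mat m) = tmat_one m"
  by (intro ext) (auto simp: tmat_mult_complement_mat_left complement_mat_def tmat_one_def)

definition column_mat :: "nat \<Rightarrow> int \<Rightarrow> tmat" where
  "column_mat m s = tmat_mult m (tiling_mat m s) (complement_mat m)"

lemma column_mat_apply:
  "column_mat m s A B =
     (if A \<subseteq> {1..m} \<and> B \<subseteq> {1..m} \<and> A \<inter> B = {} then tiling_sum s ({1..m} - A - B) else 0)"
proof -
  have "{1..m} - B - A = {1..m} - A - B"
    by blast
  then show ?thesis
    by (auto simp: column_mat_def tmat_mult_complement_mat_right tiling_mat_def)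
qed

lemma column_mat_carrier: "column_mat m s \<in> carrier (tmat_monoid m)"
  by (auto simp: tmat_carrier_iff column_mat_apply)

lemma column_mat_inverse:
  "column_mat m s \<in> Units (tmat_monoid m)"
  "inv\<^bsub>tmat_monoid m\<^esub> (column_mat m s) = tmat_mult m (complement_mat m) (tiling_mat m (- s))"
proof -
  let ?M = "tmat_monoid m" and ?E = "complement_mat m"
  let ?X = "column_mat m s" and ?Y = "tmat_mult m ?E (tiling_mat m (- s))"
  have "tmat_mult m ?X ?Y = tmat_mult m (tiling_mat m s) (tmat_mult m (tmat_mult m ?E ?E) (tiling_mat m (- s)))"
    by (simp add: column_mat_def tmat_mult_assoc)
  also have "\<dots> = tmat_one m"
    by (simp add: complement_mat_square tmat_mult_one_left tiling_mat_carrier tiling_mat_mult tiling_mat_zero)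
  finally have XY: "tmat_mult m ?X ?Y = tmat_one m" .
  have "tmat_mult m ?Y ?X = tmat_mult m ?E (tmat_mult m (tmat_mult m (tiling_mat m (- s)) (tiling_mat m s)) ?E)"
    by (simp add: column_mat_def tmat_mult_assoc)
  also have "\<dots> = tmat_one m"
    by (simp add: complement_mat_square tmat_mult_one_left complement_mat_carrier tiling_mat_mult tiling_mat_zero)
  finally have YX: "tmat_mult m ?Y ?X = tmat_one m" .
  have carrier: "?X \<in> carrier ?M" "?Y \<in> carrier ?M"
    using monoid.m_closed[OF monoid_tmat_monoid] complement_mat_carrier tiling_mat_carrier column_mat_carrier
    by simp_all
  then show "?X \<in> Units ?M"
    using XY YX by (auto simp: Units_def)
  show "inv\<^bsub>?M\<^esub> ?X = ?Y"
    using monoid.inv_unique'[OF monoid_tmat_monoid carrier] XY YX by simp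
qed

section \<open>Boundary matchings and adjunction\<close>

definition edge_degree :: "sedge set \<Rightarrow> vtx \<Rightarrow> nat" where
  "edge_degree F v = card {e \<in> F. v \<in> ends e}"

text \<open>\<open>F\<close> is a perfect matching of the \<open>m\<close>-by-\<open>N\<close> strip with edges from \<open>E\<close>, except that the
  first vertex of each row in \<open>A\<close> and the last vertex of each row in \<open>B\<close> are already
  covered by edges leaving the strip.\<close>
definition boundary_matching ::
    "nat \<Rightarrow> nat \<Rightarrow> sedge set \<Rightarrow> nat set \<Rightarrow> nat set \<Rightarrow> sedge set \<Rightarrow> bool" where
  "boundary_matching m N E A B F \<longleftrightarrow> F \<subseteq> E \<and>
     (\<forall>i\<in>{1..m}. \<forall>j\<in>{1..N}.
        edge_degree F (i, j) + of_bool (i \<in> A \<and> j = 1) + of_bool (i \<in> B \<and> j = N) = 1)"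

definition transfer :: "nat \<Rightarrow> nat \<Rightarrow> sedge set \<Rightarrow> tmat" where
  "transfer m N E A B =
     (if A \<subseteq> {1..m} \<and> B \<subseteq> {1..m}
      then \<Sum>F | boundary_matching m N E A B F. \<Prod>e\<in>F. snd e else 0)"

definition edges_within :: "nat \<Rightarrow> nat \<Rightarrow> sedge set \<Rightarrow> bool" where
  "edges_within m N E \<longleftrightarrow> finite E \<and> (\<forall>e\<in>E. ends e \<subseteq> {1..m} \<times> {1..N})"

definition join_edge :: "nat \<Rightarrow> nat \<Rightarrow> sedge" where
  "join_edge N i = (((i, N), (i, Suc N)), 1)"

definition adjoin_edges :: "nat \<Rightarrow> nat \<Rightarrow> sedge set \<Rightarrow> sedge set \<Rightarrow> sedge set" where
  "adjoin_edges m N E1 E2 = E1 \<union> shift_edge N ` E2 \<union> join_edge N ` {1..m}"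

lemma transfer_carrier: "transfer m N E \<in> carrier (tmat_monoid m)"
  by (auto simp: tmat_carrier_iff transfer_def)

lemma finite_boundary_matchings: "finite E \<Longrightarrow> finite {F. boundary_matching m N E A B F}"
  by (rule finite_subset[of _ "Pow E"]) (auto simp: boundary_matching_def)

lemma ends_shift_edge: "ends (shift_edge k e) = (\<lambda>(i, j). (i, j + k)) ` ends e"
  by (cases e) (auto simp: shift_edge_def ends_def)

lemma snd_shift_edge [simp]: "snd (shift_edge k e) = snd e"
  by (cases e) (auto simp: shift_edge_def)

lemma inj_shift_edge: "inj (shift_edge k)"
  unfolding inj_def shift_edge_def by (auto split: prod.splits)

lemma ends_join_edge: "ends (join_edge N i) = {(i, N), (i, Suc N)}"
  by (simp add: join_edge_def ends_def)

lemma inj_join_edge: "inj (join_edge N)"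
  unfolding inj_def join_edge_def by auto

lemma edge_degree_Un:
  "finite F \<Longrightarrow> finite F' \<Longrightarrow> F \<inter> F' = {} \<Longrightarrow>
    edge_degree (F \<union> F') v = edge_degree F v + edge_degree F' v"
  unfolding edge_degree_def by (subst card_Un_disjoint[symmetric]) (auto intro: arg_cong[where f = card])

lemma edge_degree_shift_edge: "edge_degree (shift_edge k ` F) (i, j + k) = edge_degree F (i, j)"
proof -
  have "{e \<in> shift_edge k ` F. (i, j + k) \<in> ends e} = shift_edge k ` {e \<in> F. (i, j) \<in> ends e}"
    by (auto simp: ends_shift_edge)
  then show ?thesis
    unfolding edge_degree_def by (simp add: card_image inj_on_subset[OF inj_shift_edge])
qed

lemma edge_degree_eq_0: "(\<And>e. e \<in> F \<Longrightarrow> v \<notin> ends e) \<Longrightarrow> edge_degree F v = 0"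
  unfolding edge_degree_def by (metis (no_types, lifting) card.empty empty_Collect_eq)

lemma edge_degree_join_edges:
  "edge_degree (join_edge N ` C) (i, j) = of_bool (i \<in> C \<and> (j = N \<or> j = Suc N))"
proof -
  have "{e \<in> join_edge N ` C. (i, j) \<in> ends e} = (if i \<in> C \<and> (j = N \<or> j = Suc N) then {join_edge N i} else {})"
    by (auto simp: ends_join_edge)
  then show ?thesis
    unfolding edge_degree_def by simp
qed

lemma edges_within_columns:
  assumes "edges_within m N E" "e \<in> E" "(i, j) \<in> ends e"
  shows "1 \<le> j" "j \<le> N"
  using assms unfolding edges_within_def by (meson atLeastAtMost_iff mem_Sigma_iff subsetD)+

lemma adjoin_edges_disjoint:
  assumes E1: "edges_within m N1 E1" and E2: "edges_within m N2 E2"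
  shows "E1 \<inter> shift_edge N1 ` E2 = {}" "join_edge N1 i \<notin> E1" "join_edge N1 i \<notin> shift_edge N1 ` E2"
proof -
  have left: "j \<le> N1" if "e \<in> E1" "(i, j) \<in> ends e" for e i j
    using edges_within_columns[OF E1 that] by simp
  have right: "N1 < j" if "e \<in> shift_edge N1 ` E2" "(i, j) \<in> ends e" for e i j
    using that edges_within_columns(1)[OF E2] by (force simp: ends_shift_edge)
  have "fst (fst e) \<in> ends e" for e
    by (simp add: ends_def)
  then show "E1 \<inter> shift_edge N1 ` E2 = {}"
    using left right by (metis disjoint_iff not_less prod.collapse)
  show "join_edge N1 i \<notin> E1"
    using left[of "join_edge N1 i" i "Suc N1"] by (auto simp: ends_join_edge)
  show "join_edge N1 i \<notin> shift_edge N1 ` E2"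
    using right[of "join_edge N1 i" i N1] by (auto simp: ends_join_edge)
qed

lemma edges_within_adjoin_edges:
  assumes "edges_within m N1 E1" "edges_within m N2 E2" "N1 \<ge> 1" "N2 \<ge> 1"
  shows "edges_within m (N1 + N2) (adjoin_edges m N1 E1 E2)"
  using assms by (fastforce simp: edges_within_def adjoin_edges_def ends_join_edge ends_shift_edge)

lemma edges_within_subset: "edges_within m N E \<Longrightarrow> F \<subseteq> E \<Longrightarrow> edges_within m N F"
  unfolding edges_within_def by (auto intro: finite_subset)

lemma boundary_matching_adjoin_edges_iff:
  assumes E1: "edges_within m N1 E1" and E2: "edges_within m N2 E2" and "N1 \<ge> 1" "N2 \<ge> 1"
    and "F1 \<subseteq> E1" "F2 \<subseteq> E2" "C \<subseteq> {1..m}"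
  shows "boundary_matching m (N1 + N2) (adjoin_edges m N1 E1 E2) A B
           (F1 \<union> shift_edge N1 ` F2 \<union> join_edge N1 ` C)
     \<longleftrightarrow> boundary_matching m N1 E1 A C F1 \<and> boundary_matching m N2 E2 C B F2"
proof -
  have F1: "edges_within m N1 F1" and F2: "edges_within m N2 F2"
    using E1 E2 \<open>F1 \<subseteq> E1\<close> \<open>F2 \<subseteq> E2\<close> by (blast intro: edges_within_subset)+
  note disjoint = adjoin_edges_disjoint[OF F1 F2]
  let ?F = "F1 \<union> shift_edge N1 ` F2 \<union> join_edge N1 ` C"
  have degree: "edge_degree ?F v
      = edge_degree F1 v + edge_degree (shift_edge N1 ` F2) v + edge_degree (join_edge N1 ` C) v" for v
  proof -
    have "finite F1" "finite F2" "finite C"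
      using F1 F2 \<open>C \<subseteq> {1..m}\<close> finite_subset by (auto simp: edges_within_def)
    moreover have "(F1 \<union> shift_edge N1 ` F2) \<inter> join_edge N1 ` C = {}"
      using disjoint(2,3) by (intro Int_image_eq_empty) simp
    ultimately show ?thesis
      using disjoint(1) by (simp add: edge_degree_Un)
  qed
  have left: "edge_degree ?F (i, j) + of_bool (i \<in> A \<and> j = 1) + of_bool (i \<in> B \<and> j = N1 + N2)
      = edge_degree F1 (i, j) + of_bool (i \<in> A \<and> j = 1) + of_bool (i \<in> C \<and> j = N1)"
    if "j \<in> {1..N1}" for i j
  proof -
    have "edge_degree (shift_edge N1 ` F2) (i, j) = 0"
      using that edges_within_columns(1)[OF F2] by (intro edge_degree_eq_0) (force simp: ends_shift_edge)
    then show ?thesis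
      using that \<open>N2 \<ge> 1\<close> \<open>C \<subseteq> {1..m}\<close> by (auto simp: degree edge_degree_join_edges)
  qed
  have right: "edge_degree ?F (i, j + N1) + of_bool (i \<in> A \<and> j + N1 = 1) + of_bool (i \<in> B \<and> j + N1 = N1 + N2)
      = edge_degree F2 (i, j) + of_bool (i \<in> C \<and> j = 1) + of_bool (i \<in> B \<and> j = N2)"
    if "j \<in> {1..N2}" for i j
  proof -
    have "edge_degree F1 (i, j + N1) = 0"
      using that edges_within_columns(2)[OF F1] by (intro edge_degree_eq_0) force
    then show ?thesis
      using that \<open>N1 \<ge> 1\<close> by (auto simp: degree edge_degree_join_edges edge_degree_shift_edge)
  qed
  have "?F \<subseteq> adjoin_edges m N1 E1 E2"
    using assms by (auto simp: adjoin_edges_def)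
  then show ?thesis
    unfolding boundary_matching_def ball_atLeastAtMost_add_split
    using assms left right by (auto simp del: of_bool_eq_1_iff)
qed

lemma adjoin_edges_components:
  assumes E1: "edges_within m N1 E1" and E2: "edges_within m N2 E2"
    and "F1 \<subseteq> E1" "F2 \<subseteq> E2" "C \<subseteq> {1..m}"
    and F: "F = F1 \<union> shift_edge N1 ` F2 \<union> join_edge N1 ` C"
  shows "{i \<in> {1..m}. join_edge N1 i \<in> F} = C" "F \<inter> E1 = F1" "{e \<in> E2. shift_edge N1 e \<in> F} = F2"
proof -
  have F1: "edges_within m N1 F1" and F2: "edges_within m N2 F2"
    using E1 E2 \<open>F1 \<subseteq> E1\<close> \<open>F2 \<subseteq> E2\<close> by (blast intro: edges_within_subset)+
  have "join_edge N1 i \<in> F \<longleftrightarrow> i \<in> C" for i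
    using adjoin_edges_disjoint(2,3)[OF F1 F2, of i] F by (simp add: inj_image_mem_iff[OF inj_join_edge])
  then show "{i \<in> {1..m}. join_edge N1 i \<in> F} = C"
    using \<open>C \<subseteq> {1..m}\<close> by auto
  have "E1 \<inter> shift_edge N1 ` F2 = {}" "E1 \<inter> join_edge N1 ` C = {}"
    using adjoin_edges_disjoint[OF E1 F2] by (auto intro: Int_image_eq_empty)
  then show "F \<inter> E1 = F1"
    using F \<open>F1 \<subseteq> E1\<close> by blast
  have "shift_edge N1 e \<in> F \<longleftrightarrow> e \<in> F2" if "e \<in> E2" for e
  proof -
    have "shift_edge N1 e \<notin> F1"
      using adjoin_edges_disjoint(1)[OF F1 E2] that by blast
    moreover have "shift_edge N1 e \<notin> join_edge N1 ` C"
      using adjoin_edges_disjoint(3)[OF E1 E2] that by (metis imageE imageI)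
    ultimately show ?thesis
      using F by (simp add: inj_image_mem_iff[OF inj_shift_edge])
  qed
  then show "{e \<in> E2. shift_edge N1 e \<in> F} = F2"
    using \<open>F2 \<subseteq> E2\<close> by auto
qed

lemma prod_sign_adjoin_edges:
  assumes E1: "edges_within m N1 E1" and E2: "edges_within m N2 E2"
    and "F1 \<subseteq> E1" "F2 \<subseteq> E2" "C \<subseteq> {1..m}"
  shows "(\<Prod>e \<in> F1 \<union> shift_edge N1 ` F2 \<union> join_edge N1 ` C. snd e) = (\<Prod>e\<in>F1. snd e) * (\<Prod>e\<in>F2. snd e)"
proof -
  have F1: "edges_within m N1 F1" and F2: "edges_within m N2 F2"
    using E1 E2 \<open>F1 \<subseteq> E1\<close> \<open>F2 \<subseteq> E2\<close> by (blast intro: edges_within_subset)+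
  have fin: "finite F1" "finite F2" "finite C"
    using assms finite_subset[OF \<open>C \<subseteq> {1..m}\<close>] by (auto simp: edges_within_def intro: finite_subset)
  have "F1 \<inter> shift_edge N1 ` F2 = {}"
    using adjoin_edges_disjoint(1)[OF F1 F2] .
  moreover have "(F1 \<union> shift_edge N1 ` F2) \<inter> join_edge N1 ` C = {}"
    using adjoin_edges_disjoint(2,3)[OF F1 F2] by (intro Int_image_eq_empty) simp
  ultimately have "(\<Prod>e \<in> F1 \<union> shift_edge N1 ` F2 \<union> join_edge N1 ` C. snd e)
      = (\<Prod>e \<in> F1. snd e) * (\<Prod>e \<in> shift_edge N1 ` F2. snd e) * (\<Prod>e \<in> join_edge N1 ` C. snd e)"
    using fin by (simp add: prod.union_disjoint)
  also have "(\<Prod>e \<in> join_edge N1 ` C. snd e) = 1"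
    by (rule prod.neutral) (auto simp: join_edge_def)
  also have "(\<Prod>e \<in> shift_edge N1 ` F2. snd e) = (\<Prod>e\<in>F2. snd e)"
    by (simp add: prod.reindex inj_on_subset[OF inj_shift_edge])
  finally show ?thesis
    by simp
qed

lemma boundary_matching_adjoin_edges_decompose:
  assumes "edges_within m N1 E1" "edges_within m N2 E2" "N1 \<ge> 1" "N2 \<ge> 1"
    and F: "boundary_matching m (N1 + N2) (adjoin_edges m N1 E1 E2) A B F"
  defines "C \<equiv> {i \<in> {1..m}. join_edge N1 i \<in> F}" and "F2 \<equiv> {e \<in> E2. shift_edge N1 e \<in> F}"
  shows "F = (F \<inter> E1) \<union> shift_edge N1 ` F2 \<union> join_edge N1 ` C"
    "boundary_matching m N1 E1 A C (F \<inter> E1)" "boundary_matching m N2 E2 C B F2"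
proof -
  show decompose: "F = (F \<inter> E1) \<union> shift_edge N1 ` F2 \<union> join_edge N1 ` C"
    using F by (auto simp: boundary_matching_def adjoin_edges_def C_def F2_def)
  have "F \<inter> E1 \<subseteq> E1" "F2 \<subseteq> E2" "C \<subseteq> {1..m}"
    by (auto simp: C_def F2_def)
  from boundary_matching_adjoin_edges_iff[OF assms(1-4) this, of A B] F decompose
  show "boundary_matching m N1 E1 A C (F \<inter> E1)" "boundary_matching m N2 E2 C B F2"
    by simp_all
qed

lemma sum_boundary_matchings_adjoin_edges:
  assumes E1: "edges_within m N1 E1" and E2: "edges_within m N2 E2" and "N1 \<ge> 1" "N2 \<ge> 1"
  shows "(\<Sum>(C, F1, F2)\<in>(SIGMA C:Pow {1..m}. {F. boundary_matching m N1 E1 A C F}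
                                          \<times> {F. boundary_matching m N2 E2 C B F}).
            (\<Prod>e\<in>F1. snd e) * (\<Prod>e\<in>F2. snd e))
    = (\<Sum>F | boundary_matching m (N1 + N2) (adjoin_edges m N1 E1 E2) A B F. \<Prod>e\<in>F. snd e)"
proof (rule sum.reindex_bij_witness[where j = "\<lambda>(C, F1, F2). F1 \<union> shift_edge N1 ` F2 \<union> join_edge N1 ` C"
      and i = "\<lambda>F. ({i \<in> {1..m}. join_edge N1 i \<in> F}, F \<inter> E1, {e \<in> E2. shift_edge N1 e \<in> F})"],
    goal_cases)
  case (1 CFF)
  then show ?case
    using adjoin_edges_components[OF E1 E2] by (force simp: boundary_matching_def)
next
  case (2 CFF)
  then show ?case
    using boundary_matching_adjoin_edges_iff[OF assms] by (force simp: boundary_matching_def)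
next
  case (3 F)
  then show ?case
    using boundary_matching_adjoin_edges_decompose(1)[OF assms] by auto
next
  case (4 F)
  then show ?case
    using boundary_matching_adjoin_edges_decompose(2,3)[OF assms] by auto
next
  case (5 CFF)
  then show ?case
    using prod_sign_adjoin_edges[OF E1 E2] by (force simp: boundary_matching_def)
qed

theorem transfer_adjoin_edges:
  assumes E1: "edges_within m N1 E1" and E2: "edges_within m N2 E2" and "N1 \<ge> 1" "N2 \<ge> 1"
  shows "transfer m (N1 + N2) (adjoin_edges m N1 E1 E2) = tmat_mult m (transfer m N1 E1) (transfer m N2 E2)"
proof (intro ext)
  fix A B
  let ?w = "\<lambda>F. \<Prod>e\<in>F. snd e"
  let ?M1 = "\<lambda>C. {F. boundary_matching m N1 E1 A C F}" and ?M2 = "\<lambda>C. {F. boundary_matching m N2 E2 C B F}"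
  show "transfer m (N1 + N2) (adjoin_edges m N1 E1 E2) A B = tmat_mult m (transfer m N1 E1) (transfer m N2 E2) A B"
  proof (cases "A \<subseteq> {1..m} \<and> B \<subseteq> {1..m}")
    case True
    have "finite E1" "finite E2"
      using E1 E2 by (auto simp: edges_within_def)
    then have "(\<Sum>C\<in>Pow {1..m}. \<Sum>F1\<in>?M1 C. \<Sum>F2\<in>?M2 C. ?w F1 * ?w F2)
        = (\<Sum>(C, F1, F2)\<in>(SIGMA C:Pow {1..m}. ?M1 C \<times> ?M2 C). ?w F1 * ?w F2)"
      by (simp add: sum.Sigma finite_boundary_matchings split_def)
    also have "\<dots> = (\<Sum>F | boundary_matching m (N1 + N2) (adjoin_edges m N1 E1 E2) A B F. ?w F)"
      by (rule sum_boundary_matchings_adjoin_edges[OF assms])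
    finally show ?thesis
      using True by (auto simp: tmat_mult_def transfer_def sum_product intro!: sum.cong)
  qed (auto simp: transfer_def tmat_mult_def)
qed

section \<open>Strips of columns\<close>

definition horizontal_edges :: "nat \<Rightarrow> nat set \<Rightarrow> sedge set" where
  "horizontal_edges m J = {(((i, j), (i, j + 1)), 1) | i j. i \<in> {1..m} \<and> j \<in> J}"

definition vertical_edges :: "nat \<Rightarrow> (nat \<Rightarrow> int option) \<Rightarrow> nat set \<Rightarrow> sedge set" where
  "vertical_edges m \<sigma> J = {(((i, j), (i + 1, j)), s) | i j s. i \<in> {1..<m} \<and> j \<in> J \<and> \<sigma> j = Some s}"

definition strip_edges :: "nat \<Rightarrow> nat \<Rightarrow> (nat \<Rightarrow> int option) \<Rightarrow> sedge set" where
  "strip_edges m N \<sigma> = horizontal_edges m {1..<N} \<union> vertical_edges m \<sigma> {1..N}"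

lemma shift_horizontal_edges:
  "shift_edge k ` horizontal_edges m J = horizontal_edges m ((\<lambda>j. j + k) ` J)"
  unfolding horizontal_edges_def shift_edge_def by (auto simp: image_iff)

lemma shift_vertical_edges:
  "shift_edge k ` vertical_edges m (\<lambda>j. \<sigma> (j + k)) J = vertical_edges m \<sigma> ((\<lambda>j. j + k) ` J)"
  unfolding vertical_edges_def shift_edge_def by (auto simp: image_iff)

lemma join_edges_eq: "join_edge N ` {1..m} = horizontal_edges m {N}"
  unfolding horizontal_edges_def join_edge_def by auto

lemma strip_edges_Suc:
  assumes "N \<ge> 1"
  shows "strip_edges m (Suc N) \<sigma> = adjoin_edges m 1 (strip_edges m 1 \<sigma>) (strip_edges m N (\<lambda>j. \<sigma> (j + 1)))"
proof -
  have "{1..<Suc N} = {1} \<union> (\<lambda>j. j + 1) ` {1..<N}" "{1..Suc N} = {1} \<union> (\<lambda>j. j + 1) ` {1..N}"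
    using assms by (auto simp: image_iff)
  then show ?thesis
    unfolding strip_edges_def adjoin_edges_def image_Un shift_horizontal_edges shift_vertical_edges join_edges_eq
    by (auto simp: horizontal_edges_def vertical_edges_def)
qed

lemma edges_within_strip_edges: "edges_within m N (strip_edges m N \<sigma>)"
proof -
  have "finite (horizontal_edges m {1..<N})"
    unfolding horizontal_edges_def
    by (rule finite_subset[of _ "(\<lambda>(i, j). (((i, j), (i, j + 1)), 1)) ` ({1..m} \<times> {1..<N})"]) auto
  moreover have "finite (vertical_edges m \<sigma> {1..N})"
    unfolding vertical_edges_def
    by (rule finite_subset[of _ "(\<lambda>(i, j). (((i, j), (i + 1, j)), the (\<sigma> j))) ` ({1..<m} \<times> {1..N})"]) force+
  ultimately show ?thesis
    by (auto simp: edges_within_def strip_edges_def horizontal_edges_def vertical_edges_def ends_def)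
qed

definition column_edge :: "int \<Rightarrow> nat \<Rightarrow> sedge" where
  "column_edge s i = (((i, 1), (i + 1, 1)), s)"

lemma snd_column_edge [simp]: "snd (column_edge s i) = s"
  by (simp add: column_edge_def)

lemma inj_column_edge: "inj (column_edge s)"
  by (rule injI) (simp add: column_edge_def)

lemma edge_degree_column_edges:
  "edge_degree (column_edge s ` L) (i, 1) = of_bool (i \<in> L) + of_bool (i \<in> Suc ` L)"
proof -
  have "{e \<in> column_edge s ` L. (i, 1) \<in> ends e} = column_edge s ` ({i} \<inter> L \<union> {j \<in> L. Suc j = i})"
    by (auto simp: column_edge_def ends_def)
  moreover have "card ({i} \<inter> L \<union> {j \<in> L. Suc j = i}) = of_bool (i \<in> L) + of_bool (i \<in> Suc ` L)"
  proof -
    have "{j \<in> L. Suc j = i} = (if i \<in> Suc ` L then {i - 1} else {})"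
      by auto
    then show ?thesis
      by auto
  qed
  ultimately show ?thesis
    unfolding edge_degree_def by (simp add: card_image inj_on_subset[OF inj_column_edge])
qed

lemma boundary_matching_column_iff:
  assumes "A \<subseteq> {1..m}" "B \<subseteq> {1..m}" "L \<subseteq> {1..<m}"
  shows "boundary_matching m 1 (column_edge s ` {1..<m}) A B (column_edge s ` L)
    \<longleftrightarrow> A \<inter> B = {} \<and> domino_tiling ({1..m} - A - B) L"
proof -
  have "boundary_matching m 1 (column_edge s ` {1..<m}) A B (column_edge s ` L) \<longleftrightarrow>
      (\<forall>i\<in>{1..m}. of_bool (i \<in> L) + of_bool (i \<in> Suc ` L) + of_bool (i \<in> A) + of_bool (i \<in> B) = (1::nat))"
    by (simp only: boundary_matching_def atLeastAtMost_singleton ball_simps simp_thms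
        edge_degree_column_edges add.assoc image_mono[OF assms(3)])
  also have "\<dots> \<longleftrightarrow> A \<inter> B = {} \<and> L \<inter> Suc ` L = {} \<and> L \<union> Suc ` L = {1..m} - A - B"
    by (rule four_way_partition_iff) (use assms in auto)
  finally show ?thesis
    by (simp add: domino_tiling_def)
qed

lemma transfer_column: "transfer m 1 (column_edge s ` {1..<m}) = column_mat m s"
proof (intro ext)
  fix A B
  show "transfer m 1 (column_edge s ` {1..<m}) A B = column_mat m s A B"
  proof (cases "A \<subseteq> {1..m} \<and> B \<subseteq> {1..m}")
    case True
    let ?E = "column_edge s ` {1..<m}"
    let ?T = "{L \<in> Pow {1..<m}. A \<inter> B = {} \<and> domino_tiling ({1..m} - A - B) L}"
    have "bij_betw ((`) (column_edge s)) (Pow {1..<m}) (Pow ?E)"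
      by (intro bij_betw_image_Pow inj_on_imp_bij_betw inj_on_subset[OF inj_column_edge]) simp
    then have bij: "bij_betw ((`) (column_edge s)) ?T {F \<in> Pow ?E. boundary_matching m 1 ?E A B F}"
      by (rule bij_betw_Collect) (use True boundary_matching_column_iff in blast)
    have "(\<Sum>L\<in>?T. s ^ card L) = (\<Sum>L\<in>?T. \<Prod>e\<in>column_edge s ` L. snd e)"
      by (simp add: prod.reindex[OF inj_on_subset[OF inj_column_edge subset_UNIV]] comp_def)
    also have "\<dots> = (\<Sum>F\<in>{F \<in> Pow ?E. boundary_matching m 1 ?E A B F}. \<Prod>e\<in>F. snd e)"
      by (rule sum.reindex_bij_betw[OF bij])
    finally have "(\<Sum>F | boundary_matching m 1 ?E A B F. \<Prod>e\<in>F. snd e) = (\<Sum>L\<in>?T. s ^ card L)"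
      by (simp add: boundary_matching_def)
    moreover have "?T = {L. A \<inter> B = {} \<and> domino_tiling ({1..m} - A - B) L}"
      using domino_tiling_subset_atLeastLessThan[of "{1..m} - A - B" _ m] by auto
    ultimately show ?thesis
      using True by (simp add: transfer_def column_mat_apply tiling_sum_def)
  qed (auto simp: transfer_def column_mat_apply)
qed

lemma transfer_empty_column: "transfer m 1 {} = complement_mat m"
proof (intro ext)
  fix A B
  have "edge_degree {} v = 0" for v
    by (simp add: edge_degree_def)
  then have "boundary_matching m 1 {} A B F \<longleftrightarrow>
      F = {} \<and> (\<forall>i\<in>{1..m}. of_bool (i \<in> A) + of_bool (i \<in> B) = (1::nat))" for F
    unfolding boundary_matching_def by (cases "F = {}") simp_all
  moreover have "(\<forall>i\<in>{1..m}. of_bool (i \<in> A) + of_bool (i \<in> B) = (1::nat)) \<longleftrightarrow> B = {1..m} - A"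
    if "B \<subseteq> {1..m}"
    using that by (auto simp: of_bool_def split: if_splits)
  ultimately have "{F. boundary_matching m 1 {} A B F} = (if B = {1..m} - A then {{}} else {})"
    if "B \<subseteq> {1..m}"
    using that by auto
  then show "transfer m 1 {} A B = complement_mat m A B"
    by (auto simp: transfer_def complement_mat_def)
qed

definition column_transfer :: "nat \<Rightarrow> int option \<Rightarrow> tmat" where
  "column_transfer m c = (case c of None \<Rightarrow> complement_mat m | Some s \<Rightarrow> column_mat m s)"

lemma column_transfer_carrier: "column_transfer m c \<in> carrier (tmat_monoid m)"
  by (cases c) (simp_all add: column_transfer_def complement_mat_carrier column_mat_carrier)

lemma transfer_strip_edges_1: "transfer m 1 (strip_edges m 1 \<sigma>) = column_transfer m (\<sigma> 1)"
proof (cases "\<sigma> 1")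
  case None
  then have strip: "strip_edges m 1 \<sigma> = {}"
    by (auto simp: strip_edges_def horizontal_edges_def vertical_edges_def)
  show ?thesis
    unfolding strip transfer_empty_column using None by (simp add: column_transfer_def)
next
  case (Some s)
  then have strip: "strip_edges m 1 \<sigma> = column_edge s ` {1..<m}"
    by (auto simp: strip_edges_def horizontal_edges_def vertical_edges_def column_edge_def)
  show ?thesis
    unfolding strip transfer_column using Some by (simp add: column_transfer_def)
qed

lemma transfer_strip_edges:
  assumes "N \<ge> 1"
  shows "transfer m N (strip_edges m N \<sigma>)
    = foldr (tmat_mult m) (map (\<lambda>j. column_transfer m (\<sigma> j)) [1..<N + 1]) (tmat_one m)"
  using assms
proof (induction N arbitrary: \<sigma> rule: dec_induct)
  case base
  then show ?case
    unfolding transfer_strip_edges_1 by (simp add: tmat_mult_one_right column_transfer_carrier)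
next
  case (step N)
  have "transfer m (Suc N) (strip_edges m (Suc N) \<sigma>)
      = transfer m (1 + N) (adjoin_edges m 1 (strip_edges m 1 \<sigma>) (strip_edges m N (\<lambda>j. \<sigma> (j + 1))))"
    by (simp only: strip_edges_Suc[OF step(1)] plus_1_eq_Suc)
  also have "\<dots> = tmat_mult m (transfer m 1 (strip_edges m 1 \<sigma>)) (transfer m N (strip_edges m N (\<lambda>j. \<sigma> (j + 1))))"
    by (rule transfer_adjoin_edges[OF edges_within_strip_edges edges_within_strip_edges order.refl step(1)])
  also have "\<dots> = tmat_mult m (column_transfer m (\<sigma> 1))
      (foldr (tmat_mult m) (map (\<lambda>j. column_transfer m (\<sigma> (j + 1))) [1..<N + 1]) (tmat_one m))"
    by (simp only: transfer_strip_edges_1 step.IH)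
  also have "\<dots> = foldr (tmat_mult m) (map (\<lambda>j. column_transfer m (\<sigma> j)) [1..<Suc N + 1]) (tmat_one m)"
    by (simp add: upt_conv_Cons map_Suc_upt[symmetric] comp_def del: upt_Suc)
  finally show ?case .
qed

section \<open>Signed graphs and the grids \<open>G(m, n)\<close>\<close>

definition wf_sgraph :: "nat \<Rightarrow> sgraph \<Rightarrow> bool" where
  "wf_sgraph m g \<longleftrightarrow> ncols g \<ge> 1 \<and> distinct (sedges g) \<and> edges_within m (ncols g) (set (sedges g))"

definition sgraph_transfer :: "nat \<Rightarrow> sgraph \<Rightarrow> tmat" where
  "sgraph_transfer m g = transfer m (ncols g) (set (sedges g))"

lemma perfect_matching_iff_boundary_matching:
  assumes "wf_sgraph m g" "S \<subseteq> {..<length (sedges g)}"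
  shows "perfect_matching m g S
    \<longleftrightarrow> boundary_matching m (ncols g) (set (sedges g)) {} {} ((!) (sedges g) ` S)"
proof -
  have inj: "inj_on ((!) (sedges g)) S"
    using assms by (auto simp: wf_sgraph_def intro: inj_on_nth)
  have "ends (sedges g ! i) \<subseteq> verts m g" if "i \<in> S" for i
  proof -
    have "sedges g ! i \<in> set (sedges g)"
      using assms(2) that by auto
    then show ?thesis
      using assms(1) unfolding wf_sgraph_def edges_within_def verts_def by blast
  qed
  moreover have "(!) (sedges g) ` S \<subseteq> set (sedges g)"
    using assms(2) by auto
  ultimately show ?thesis
    using assms(2) card_filter_image[OF inj, of "\<lambda>e. _ \<in> ends e"]
    by (auto simp: perfect_matching_def boundary_matching_def edge_degree_def verts_def)
qed

lemma Mat_eq_sgraph_transfer: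
  assumes "wf_sgraph m g"
  shows "Mat m g = sgraph_transfer m g {} {}"
proof -
  let ?es = "sedges g"
  let ?P = "{S \<in> Pow {..<length ?es}. perfect_matching m g S}"
  let ?B = "{F \<in> Pow (set ?es). boundary_matching m (ncols g) (set ?es) {} {} F}"
  have bij: "bij_betw ((`) ((!) ?es)) ?P ?B"
  proof (rule bij_betw_Collect)
    show "bij_betw ((`) ((!) ?es)) (Pow {..<length ?es}) (Pow (set ?es))"
      using assms by (intro bij_betw_image_Pow bij_betw_nth) (auto simp: wf_sgraph_def)
  qed (use assms perfect_matching_iff_boundary_matching in blast)
  have "{S. perfect_matching m g S} = ?P"
    by (auto simp: perfect_matching_def)
  then have "Mat m g = (\<Sum>S\<in>?P. \<Prod>i\<in>S. snd (?es ! i))"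
    by (simp add: Mat_def)
  also have "\<dots> = (\<Sum>S\<in>?P. \<Prod>e\<in>(!) ?es ` S. snd e)"
  proof (rule sum.cong)
    fix S assume "S \<in> ?P"
    then have "inj_on ((!) ?es) S"
      using assms by (intro inj_on_nth) (auto simp: wf_sgraph_def)
    then show "(\<Prod>i\<in>S. snd (?es ! i)) = (\<Prod>e\<in>(!) ?es ` S. snd e)"
      by (simp add: prod.reindex)
  qed simp
  also have "\<dots> = (\<Sum>F\<in>?B. \<Prod>e\<in>F. snd e)"
    by (rule sum.reindex_bij_betw[OF bij])
  also have "?B = {F. boundary_matching m (ncols g) (set ?es) {} {} F}"
    by (auto simp: boundary_matching_def)
  finally show ?thesis
    by (simp add: sgraph_transfer_def transfer_def)
qed

lemma sedges_adjoin:
  "sedges (adjoin m g1 g2) =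
     sedges g1 @ map (shift_edge (ncols g1)) (sedges g2) @ map (join_edge (ncols g1)) [1..<m + 1]"
  by (simp add: adjoin_def join_edge_def)

lemma ncols_adjoin: "ncols (adjoin m g1 g2) = ncols g1 + ncols g2"
  by (simp add: adjoin_def)

lemma set_sedges_adjoin:
  "set (sedges (adjoin m g1 g2)) = adjoin_edges m (ncols g1) (set (sedges g1)) (set (sedges g2))"
  by (auto simp: sedges_adjoin adjoin_edges_def)

lemma wf_sgraph_adjoin:
  assumes g1: "wf_sgraph m g1" and g2: "wf_sgraph m g2"
  shows "wf_sgraph m (adjoin m g1 g2)"
proof -
  let ?N1 = "ncols g1"
  have E1: "edges_within m ?N1 (set (sedges g1))" and E2: "edges_within m (ncols g2) (set (sedges g2))"
    using g1 g2 by (simp_all add: wf_sgraph_def)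
  note disjoint = adjoin_edges_disjoint[OF E1 E2]
  have "set (map (join_edge ?N1) [1..<m + 1]) = join_edge ?N1 ` {1..m}"
    by auto
  moreover have "set (sedges g1) \<inter> join_edge ?N1 ` {1..m} = {}"
    using disjoint(2) by (intro Int_image_eq_empty) simp
  moreover have "shift_edge ?N1 ` set (sedges g2) \<inter> join_edge ?N1 ` {1..m} = {}"
    using disjoint(3) by (intro Int_image_eq_empty) simp
  moreover have "distinct (map (shift_edge ?N1) (sedges g2))" "distinct (map (join_edge ?N1) [1..<m + 1])"
    using g2 by (simp_all add: wf_sgraph_def distinct_map inj_on_subset[OF inj_shift_edge]
        inj_on_subset[OF inj_join_edge])
  ultimately have "distinct (sedges (adjoin m g1 g2))"
    using g1 disjoint(1) by (simp add: sedges_adjoin wf_sgraph_def Int_Un_distrib)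
  moreover have "edges_within m (ncols (adjoin m g1 g2)) (set (sedges (adjoin m g1 g2)))"
    using g1 g2 edges_within_adjoin_edges[OF E1 E2]
    by (simp add: wf_sgraph_def set_sedges_adjoin ncols_adjoin)
  ultimately show ?thesis
    using g1 by (simp add: wf_sgraph_def ncols_adjoin)
qed

lemma sgraph_transfer_adjoin:
  assumes "wf_sgraph m g1" "wf_sgraph m g2"
  shows "sgraph_transfer m (adjoin m g1 g2) = tmat_mult m (sgraph_transfer m g1) (sgraph_transfer m g2)"
  using assms transfer_adjoin_edges[of m "ncols g1" "set (sedges g1)" "ncols g2" "set (sedges g2)"]
  unfolding sgraph_transfer_def set_sedges_adjoin ncols_adjoin wf_sgraph_def by simp

lemma wf_sgraph_adjoin_list:
  "gs \<noteq> [] \<Longrightarrow> (\<And>g. g \<in> set gs \<Longrightarrow> wf_sgraph m g) \<Longrightarrow> wf_sgraph m (adjoin_list m gs)"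
  by (induction m gs rule: adjoin_list.induct) (auto intro: wf_sgraph_adjoin)

lemma sgraph_transfer_adjoin_list:
  "gs \<noteq> [] \<Longrightarrow> (\<And>g. g \<in> set gs \<Longrightarrow> wf_sgraph m g) \<Longrightarrow>
    sgraph_transfer m (adjoin_list m gs) = foldr (tmat_mult m) (map (sgraph_transfer m) gs) (tmat_one m)"
proof (induction m gs rule: adjoin_list.induct)
  case (2 m g)
  then show ?case
    by (simp add: sgraph_transfer_def tmat_mult_one_right transfer_carrier)
next
  case (3 m g g' gs)
  have "wf_sgraph m (adjoin_list m (g' # gs))"
    using "3.prems" by (intro wf_sgraph_adjoin_list) auto
  with 3 show ?case
    by (simp add: sgraph_transfer_adjoin)
qed simp

lemma set_hedges: "set (hedges m N) = horizontal_edges m {1..<N}"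
  by (auto simp: hedges_def horizontal_edges_def)

lemma set_vedges: "set (vedges m cols s) = vertical_edges m (\<lambda>_. Some s) (set cols)"
  by (auto simp: vedges_def vertical_edges_def)

lemma distinct_hedges: "distinct (hedges m N)"
proof -
  have "hedges m N = map (\<lambda>(i, j). (((i, j), (i, j + 1)), 1)) (List.product [1..<m + 1] [1..<N])"
    by (simp add: hedges_def product_concat_map map_concat comp_def)
  then show ?thesis
    by (auto simp: distinct_map distinct_product inj_on_def)
qed

lemma distinct_vedges: "distinct cols \<Longrightarrow> distinct (vedges m cols s)"
proof -
  have "vedges m cols s = map (\<lambda>(i, j). (((i, j), (i + 1, j)), s)) (List.product [1..<m] cols)"
    by (simp add: vedges_def product_concat_map map_concat comp_def)
  then show "distinct cols \<Longrightarrow> ?thesis"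
    by (auto simp: distinct_map distinct_product inj_on_def)
qed

lemma horizontal_vertical_edges_disjoint: "horizontal_edges m J \<inter> vertical_edges m \<sigma> K = {}"
  by (auto simp: horizontal_edges_def vertical_edges_def)

lemma Ggrid_pos:
  assumes "n \<ge> 1"
  shows "ncols (Ggrid m n) = nat n" "set (sedges (Ggrid m n)) = strip_edges m (nat n) (\<lambda>_. Some 1)"
  using assms
  by (simp_all add: Ggrid_def set_hedges set_vedges strip_edges_def atLeastLessThanSuc_atLeastAtMost
      del: upt_Suc)

lemma vertical_edges_indicator:
  "vertical_edges m (\<lambda>j. if j \<in> J then Some s else None) K = vertical_edges m (\<lambda>_. Some s) (J \<inter> K)"
  by (auto simp: vertical_edges_def split: if_splits)

lemma Ggrid_nonpos:
  assumes "n \<le> 0"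
  shows "ncols (Ggrid m n) = nat (- n) + 2"
    "set (sedges (Ggrid m n))
       = strip_edges m (nat (- n) + 2) (\<lambda>j. if j \<in> {2..<nat (- n) + 2} then Some (- 1) else None)"
proof -
  have N: "nat (2 - n) = nat (- n) + 2"
    using assms by simp
  then show "ncols (Ggrid m n) = nat (- n) + 2"
    using assms by (simp add: Ggrid_def)
  have "{2..<nat (- n) + 2} \<inter> {1..nat (- n) + 2} = {2..<nat (- n) + 2}"
    by auto
  then have "strip_edges m (nat (- n) + 2) (\<lambda>j. if j \<in> {2..<nat (- n) + 2} then Some (- 1) else None)
      = horizontal_edges m {1..<nat (- n) + 2} \<union> vertical_edges m (\<lambda>_. Some (- 1)) {2..<nat (- n) + 2}"
    unfolding strip_edges_def vertical_edges_indicator by simp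
  then show "set (sedges (Ggrid m n))
      = strip_edges m (nat (- n) + 2) (\<lambda>j. if j \<in> {2..<nat (- n) + 2} then Some (- 1) else None)"
    using assms by (simp add: Ggrid_def N set_hedges set_vedges del: upt_Suc)
qed

lemma wf_sgraph_Ggrid: "wf_sgraph m (Ggrid m n)"
proof (cases "n \<ge> 1")
  case True
  then show ?thesis
    using Ggrid_pos[OF True] edges_within_strip_edges horizontal_vertical_edges_disjoint
    by (auto simp: wf_sgraph_def Ggrid_def distinct_hedges distinct_vedges set_hedges set_vedges)
next
  case False
  then show ?thesis
    using Ggrid_nonpos[of n] edges_within_strip_edges horizontal_vertical_edges_disjoint
    by (auto simp: wf_sgraph_def Ggrid_def distinct_hedges distinct_vedges set_hedges set_vedges)
qed

lemma sgraph_transfer_Ggrid_pos: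
  assumes "n \<ge> 1"
  shows "sgraph_transfer m (Ggrid m n) = column_mat m 1 [^]\<^bsub>tmat_monoid m\<^esub> nat n"
proof -
  interpret M: monoid "tmat_monoid m"
    by (rule monoid_tmat_monoid)
  have "map (\<lambda>j. column_transfer m (Some 1)) [1..<nat n + 1] = replicate (nat n) (column_mat m 1)"
    by (simp add: column_transfer_def map_replicate_const)
  then have "sgraph_transfer m (Ggrid m n) = foldr (tmat_mult m) (replicate (nat n) (column_mat m 1)) (tmat_one m)"
    using assms by (simp add: sgraph_transfer_def Ggrid_pos transfer_strip_edges)
  then show ?thesis
    using M.foldr_mult_replicate[OF column_mat_carrier M.one_closed, of "nat n"]
      M.r_one[OF M.nat_pow_closed[OF column_mat_carrier]]
    by simp
qed

text \<open>\<open>G(m, -p)\<close> is an empty column, \<open>p\<close> columns of \<open>-1\<close>-signed vertical edges and an empty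
  column; since the empty column squares to the identity, \<open>E (T E)\<^sup>p E = (E T)\<^sup>p\<close>.\<close>
lemma sgraph_transfer_Ggrid_nonpos:
  assumes "n \<le> 0"
  shows "sgraph_transfer m (Ggrid m n)
    = tmat_mult m (complement_mat m) (tiling_mat m (- 1)) [^]\<^bsub>tmat_monoid m\<^esub> nat (- n)"
proof -
  interpret M: monoid "tmat_monoid m"
    by (rule monoid_tmat_monoid)
  let ?M = "tmat_monoid m" and ?E = "complement_mat m" and ?T = "tiling_mat m (- 1)"
  let ?p = "nat (- n)" and ?\<sigma> = "\<lambda>j. if j \<in> {2..<nat (- n) + 2} then Some (- 1) else None"
  let ?C = "column_mat m (- 1)"
  have "[1..<?p + 2 + 1] = 1 # [2..<?p + 2] @ [?p + 2]"
    by (simp add: upt_conv_Cons numeral_2_eq_2)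
  moreover have "map (\<lambda>j. column_transfer m (?\<sigma> j)) [2..<?p + 2] = replicate ?p ?C"
    by (rule nth_equalityI) (simp_all add: column_transfer_def del: upt_Suc)
  ultimately have columns: "map (\<lambda>j. column_transfer m (?\<sigma> j)) [1..<?p + 2 + 1] = ?E # replicate ?p ?C @ [?E]"
    by (simp add: column_transfer_def del: upt_Suc)
  have rotate: "tmat_mult m ?E (tmat_mult m ?T ?E [^]\<^bsub>?M\<^esub> ?p) = tmat_mult m (tmat_mult m ?E ?T [^]\<^bsub>?M\<^esub> ?p) ?E"
    using M.mult_nat_pow_rotate[OF complement_mat_carrier tiling_mat_carrier] by simp
  have "sgraph_transfer m (Ggrid m n)
      = foldr (tmat_mult m) (map (\<lambda>j. column_transfer m (?\<sigma> j)) [1..<?p + 2 + 1]) (tmat_one m)"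
    unfolding sgraph_transfer_def Ggrid_nonpos[OF assms] by (rule transfer_strip_edges) simp
  also have "\<dots> = tmat_mult m ?E (tmat_mult m (?C [^]\<^bsub>?M\<^esub> ?p) ?E)"
    unfolding columns
    using M.foldr_mult_replicate[OF column_mat_carrier[of m "- 1"] complement_mat_carrier, of ?p]
    by (simp add: tmat_mult_one_right complement_mat_carrier)
  also have "\<dots> = tmat_mult m (tmat_mult m (tmat_mult m ?E ?T [^]\<^bsub>?M\<^esub> ?p) ?E) ?E"
    by (simp only: column_mat_def tmat_mult_assoc[symmetric] rotate)
  also have "\<dots> = tmat_mult m ?E ?T [^]\<^bsub>?M\<^esub> ?p"
    using M.nat_pow_closed[OF M.m_closed[OF complement_mat_carrier tiling_mat_carrier]]
    by (simp add: tmat_mult_assoc complement_mat_square tmat_mult_one_right)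
  finally show ?thesis .
qed

lemma sgraph_transfer_Ggrid:
  "sgraph_transfer m (Ggrid m n) = column_mat m 1 [^]\<^bsub>units_of (tmat_monoid m)\<^esub> n"
proof -
  let ?M = "tmat_monoid m" and ?G = "units_of (tmat_monoid m)" and ?P = "column_mat m 1"
  interpret M: monoid ?M
    by (rule monoid_tmat_monoid)
  interpret G: group ?G
    by (rule M.units_group)
  have P: "?P \<in> Units ?M"
    by (rule column_mat_inverse(1))
  show ?thesis
  proof (cases "n \<ge> 1")
    case True
    then have "sgraph_transfer m (Ggrid m n) = ?P [^]\<^bsub>?G\<^esub> nat n"
      by (simp add: sgraph_transfer_Ggrid_pos M.units_of_pow[OF P])
    then show ?thesis
      using True by simp
  next
    case False
    then have "n \<le> 0"
      by simp
    have "inv\<^bsub>?M\<^esub> ?P \<in> Units ?M"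
      by (rule M.Units_inv_Units[OF P])
    then have "sgraph_transfer m (Ggrid m n) = (inv\<^bsub>?G\<^esub> ?P) [^]\<^bsub>?G\<^esub> nat (- n)"
      using P by (simp add: sgraph_transfer_Ggrid_nonpos[OF \<open>n \<le> 0\<close>] M.units_of_pow M.units_of_inv
          flip: column_mat_inverse(2))
    also have "\<dots> = inv\<^bsub>?G\<^esub> (?P [^]\<^bsub>?G\<^esub> nat (- n))"
      using P by (intro G.nat_pow_inv) (simp add: units_of_carrier)
    also have "\<dots> = ?P [^]\<^bsub>?G\<^esub> n"
      using \<open>n \<le> 0\<close> P G.int_pow_neg_int[of ?P "nat (- n)"] by (simp add: units_of_carrier)
    finally show ?thesis .
  qed
qed

theorem mainTheorem3:
  fixes m :: nat and ns :: "int list"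
  assumes "m \<ge> 1" and "ns \<noteq> []"
  shows "Mat m (adjoin_list m (map (Ggrid m) ns)) = Mat m (Ggrid m (sum_list ns))"
proof -
  let ?G = "units_of (tmat_monoid m)" and ?P = "column_mat m 1"
  interpret G: group ?G
    by (rule monoid.units_group[OF monoid_tmat_monoid])
  have P: "?P \<in> carrier ?G"
    by (simp add: units_of_carrier column_mat_inverse(1))
  have nonempty: "map (Ggrid m) ns \<noteq> []"
    using assms(2) by simp
  have wf: "wf_sgraph m g" if "g \<in> set (map (Ggrid m) ns)" for g
    using that wf_sgraph_Ggrid by auto
  have "sgraph_transfer m (adjoin_list m (map (Ggrid m) ns))
      = foldr (tmat_mult m) (map (sgraph_transfer m) (map (Ggrid m) ns)) (tmat_one m)"
    by (rule sgraph_transfer_adjoin_list[OF nonempty wf])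
  also have "\<dots> = foldr (tmat_mult m) (map (\<lambda>n. ?P [^]\<^bsub>?G\<^esub> n) ns) (tmat_one m)"
    by (simp add: sgraph_transfer_Ggrid comp_def)
  also have "\<dots> = sgraph_transfer m (Ggrid m (sum_list ns))"
    using G.foldr_mult_int_pow[OF P, of ns] by (simp add: units_of_mult units_of_one sgraph_transfer_Ggrid)
  finally show ?thesis
    using Mat_eq_sgraph_transfer wf_sgraph_Ggrid wf_sgraph_adjoin_list[OF nonempty wf] by simp
qed

end
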